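(* Fix $c\in(0,1/2)$. Each of the following classes $\mathbb D$ of distributions on $\mathbb R^d\times\mathbb R$ satisfies Condition 3 with constant $c$: (1) (Polynomial log-densities) the class of distributions $\mathcal P$ with $\mathrm{supp}(\mathcal P_X)=\mathbb R^d$ and otherwise arbitrary $x$-marginal $\mathcal P_X$, whose conditional density satisfies $\mathcal P(y\mid x)\propto e^{f_{\mathcal P}(x,y)}$ for some polynomial $f_{\mathcal P}$ in $(x,y)$ (with $\int e^{f_{\mathcal P}(x,y)}dy<\infty$ for all $x$); (2) (Polynomial expectations) the class of distributions $\mathcal P$ with $\mathrm{supp}(\mathcal P_X)=\mathbb R^d$ and otherwise arbitrary $x$-marginal, such that $\mathbb E_{(x,y)\sim\mathcal P}[y\mid X=x]=f_{\mathcal P}(x)$ for some polynomial $f_{\mathcal P}$.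
   Context: For a distribution $\mathcal P$ with density on $\mathbb R^d\times\mathbb R$, $\mathcal P(x,y)$ denotes its density, $\mathcal P_X$ its $x$-marginal and $\mathcal P(y\mid x)$ its conditional density. $\mathrm{vol}$ denotes Lebesgue measure. Condition 3 (constant $c$): for all $\mathcal P,\mathcal Q\in\mathbb D$ with $\mathbb E_{(x,y)\sim\mathcal P}[y]\neq\mathbb E_{(x,y)\sim\mathcal Q}[y]$, either $\mathcal P_X\neq\mathcal Q_X$, or there is no set $S\subseteq\mathbb R^d$ with $\mathrm{vol}(S)\ge c$ such that $\mathcal P(x,y)=\mathcal Q(x,y)$ for all $(x,y)\in S\times\mathbb R$. *)

theory Defs
  imports "HOL-Analysis.Analysis"
begin

text \<open>A distribution on R^d x R with a density is represented by its joint density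
  function p :: real^'d x real => real (w.r.t. Lebesgue measure on R^(d+1)).\<close>

definition is_density :: "((real^'d::finite) \<times> real \<Rightarrow> real) \<Rightarrow> bool" where
  "is_density p \<longleftrightarrow> p \<in> borel_measurable borel \<and> (\<forall>z. 0 \<le> p z) \<and>
     (\<integral>\<^sup>+ z. ennreal (p z) \<partial>lborel) = 1"

definition marg :: "((real^'d::finite) \<times> real \<Rightarrow> real) \<Rightarrow> (real^'d::finite) \<Rightarrow> real" where
  "marg p x = (\<integral> y. p (x, y) \<partial>lborel)"

definition marg_measure :: "((real^'d::finite) \<times> real \<Rightarrow> real) \<Rightarrow> (real^'d::finite) measure" where
  "marg_measure p = density lborel (\<lambda>x. ennreal (marg p x))"

definition cond_dens :: "((real^'d::finite) \<times> real \<Rightarrow> real) \<Rightarrow> (real^'d::finite) \<Rightarrow> real \<Rightarrow> real" where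
  "cond_dens p x y = p (x, y) / marg p x"

definition expect_y :: "((real^'d::finite) \<times> real \<Rightarrow> real) \<Rightarrow> real" where
  "expect_y p = (\<integral> z. snd z * p z \<partial>lborel)"

definition has_expect_y :: "((real^'d::finite) \<times> real \<Rightarrow> real) \<Rightarrow> bool" where
  "has_expect_y p \<longleftrightarrow> integrable lborel (\<lambda>z. snd z * p z)"

definition condition3 :: "real \<Rightarrow> ((real^'d::finite) \<times> real \<Rightarrow> real) set \<Rightarrow> bool" where
  "condition3 c D \<longleftrightarrow>
     (\<forall>P\<in>D. \<forall>Q\<in>D. has_expect_y P \<and> has_expect_y Q \<and> expect_y P \<noteq> expect_y Q \<longrightarrow>
        marg_measure P \<noteq> marg_measure Q \<or>
        \<not> (\<exists>S \<in> sets lebesgue. emeasure lebesgue S \<ge> ennreal c \<and>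
              (\<forall>x\<in>S. \<forall>y. P (x, y) = Q (x, y))))"

definition poly_logdens_class :: "((real^'d::finite) \<times> real \<Rightarrow> real) set" where
  "poly_logdens_class = {p. is_density p \<and> (\<forall>x. 0 < marg p x) \<and>
     (\<exists>f k. real_polynomial_function f \<and>
        (\<forall>x. integrable lborel (\<lambda>y. exp (f (x, y)))) \<and>
        (\<forall>x y. cond_dens p x y = k x * exp (f (x, y))))}"

definition poly_expect_class :: "((real^'d::finite) \<times> real \<Rightarrow> real) set" where
  "poly_expect_class = {p. is_density p \<and> (\<forall>x. 0 < marg p x) \<and>
     (\<exists>f :: (real^'d::finite) \<Rightarrow> real. real_polynomial_function f \<and>
        (\<forall>x. integrable lborel (\<lambda>y. y * cond_dens p x y) \<and>
             (\<integral> y. y * cond_dens p x y \<partial>lborel) = f x))}"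

end

(*
  A real polynomial on R^n that vanishes on a set of positive Lebesgue measure vanishes
  identically: otherwise some line through a point where it is non-zero would meet its zero
  set uncountably often, while on that line it is a non-zero univariate polynomial.

  If P and Q agree on S \<times> R, their conditional densities agree for x \<in> S. In class (2) the
  conditional means are polynomials agreeing on S, hence everywhere. In class (1) the difference
  f_P - f_Q of the log-densities is constant in y for x \<in> S; for each fixed y this is a
  polynomial identity in x, so it holds for all x, and the conditional densities are
  proportional and, being normalised, equal. With equal marginals, equal conditional means
  give equal expectations of y.
*)

theory Submission
  imports Defs
begin

lemma real_polynomial_function_finite_roots:
  fixes g :: "real \<Rightarrow> real"
  assumes "real_polynomial_function g" and "g t\<^sub>0 \<noteq> 0"
  shows "finite {t. g t = 0}"
proof -
  obtain c n where g: "g = (\<lambda>t. \<Sum>i\<le>n. c i * t ^ i)"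
    using real_polynomial_function_imp_sum[OF assms(1)] by blast
  then have "\<exists>i\<le>n. c i \<noteq> 0"
    using assms(2) polyfun_eq_0 by auto
  then show ?thesis
    unfolding g using polyfun_finite_roots by blast
qed

lemma real_polynomial_function_along_line:
  fixes p :: "'a::real_normed_vector \<Rightarrow> real"
  assumes "real_polynomial_function p"
  shows "real_polynomial_function (\<lambda>t. p (a + t *\<^sub>R v))"
proof -
  have "polynomial_function (\<lambda>t::real. a + t *\<^sub>R v)"
    by (intro polynomial_function_add polynomial_function_mult) auto
  from real_polynomial_function_compose[OF this assms] show ?thesis
    by (simp add: comp_def)
qed

lemma real_polynomial_function_slice:
  fixes f :: "'a::real_normed_vector \<times> 'b::real_normed_vector \<Rightarrow> real"
  assumes "real_polynomial_function f"
  shows "real_polynomial_function (\<lambda>x. f (x, y))"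
proof -
  have "polynomial_function (\<lambda>x::'a. (x, 0::'b) + (0, y))"
    by (intro polynomial_function_add polynomial_function_const polynomial_function_bounded_linear
        bounded_linear_Pair[OF bounded_linear_ident bounded_linear_zero])
  from real_polynomial_function_compose[OF this assms] show ?thesis
    by (simp add: comp_def)
qed

lemma emeasure_lborel_affine_vimage:
  fixes Z :: "'a::euclidean_space set"
  assumes "c \<noteq> 0" and "Z \<in> sets borel"
  shows "emeasure lborel Z = ennreal (\<bar>c\<bar> ^ DIM('a)) * emeasure lborel ((\<lambda>x. b + c *\<^sub>R x) -` Z)"
proof -
  have "emeasure lborel Z = emeasure (density (distr lborel borel (\<lambda>x. b + c *\<^sub>R x)) (\<lambda>_. \<bar>c\<bar> ^ DIM('a))) Z"
    using lborel_affine[OF assms(1), of b] by (rule arg_cong)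
  also have "\<dots> = ennreal (\<bar>c\<bar> ^ DIM('a)) * emeasure lborel ((\<lambda>x. b + c *\<^sub>R x) -` Z)"
    using assms(2) by (simp add: emeasure_density_const emeasure_distr)
  finally show ?thesis .
qed

lemma uncountable_line_inter_if_emeasure_pos:
  fixes Z :: "'a::euclidean_space set"
  assumes Z: "Z \<in> sets borel" and pos: "0 < emeasure lborel Z"
  shows "\<exists>x. uncountable {t::real. a + t *\<^sub>R (x - a) \<in> Z}"
proof (rule ccontr)
  assume "\<not> ?thesis"
  then have countable_lines: "countable {t::real. a + t *\<^sub>R (x - a) \<in> Z}" for x
    by blast
  \<comment> \<open>W is null since its slices in t are countable, but for t \<noteq> 0 its slice in x is an affine preimage of Z.\<close>
  define W where "W = {(t::real, x). a + t *\<^sub>R (x - a) \<in> Z}"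
  have "(\<lambda>(t, x). a + t *\<^sub>R (x - a)) \<in> borel_measurable borel"
    unfolding split_beta' by (intro borel_measurable_continuous_onI continuous_intros)
  then have W: "W \<in> sets (lborel \<Otimes>\<^sub>M lborel)"
    unfolding W_def lborel_prod using measurable_sets_borel[OF _ Z] by (simp add: vimage_def split_beta')
  have "emeasure (lborel \<Otimes>\<^sub>M lborel) W = (\<integral>\<^sup>+x. emeasure lborel ((\<lambda>t. (t, x)) -` W) \<partial>lborel)"
    using W by (rule lborel_pair.emeasure_pair_measure_alt2)
  also have "\<dots> = 0"
    using countable_lines by (simp add: W_def emeasure_lborel_countable)
  finally have "(\<integral>\<^sup>+t. emeasure lborel (Pair t -` W) \<partial>lborel) = 0"
    using lborel.emeasure_pair_measure_alt[OF W] by simp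
  then have null: "AE t in lborel. emeasure lborel (Pair t -` W) = 0"
    using lborel.measurable_emeasure_Pair[OF W] by (simp add: nn_integral_0_iff_AE)
  have nonnull: "emeasure lborel (Pair t -` W) \<noteq> 0" if "t \<noteq> 0" for t
  proof -
    have "Pair t -` W = (\<lambda>x. (a - t *\<^sub>R a) + t *\<^sub>R x) -` Z"
      by (auto simp: W_def algebra_simps)
    then show ?thesis
      using emeasure_lborel_affine_vimage[OF that Z, of "a - t *\<^sub>R a"] pos by auto
  qed
  have "AE t in (lborel :: real measure). False"
    using null AE_lborel_singleton[of "0::real"] by (rule eventually_elim2) (use nonnull in blast)
  then show False
    using ae_filter_eq_bot_iff[of "lborel :: real measure"] trivial_limit_def by simp
qed

lemma real_polynomial_function_eq_if_eq_on_positive_measure: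
  fixes p q :: "'a::euclidean_space \<Rightarrow> real"
  assumes p: "real_polynomial_function p" and q: "real_polynomial_function q"
    and S: "S \<in> sets lebesgue" "0 < emeasure lebesgue S" and eq: "\<And>x. x \<in> S \<Longrightarrow> p x = q x"
  shows "p = q"
proof
  fix a
  show "p a = q a"
  proof (rule ccontr)
    assume "p a \<noteq> q a"
    define Z where "Z = {x. p x - q x = 0}"
    have pq: "real_polynomial_function (\<lambda>x. p x - q x)"
      using p q by (rule real_polynomial_function_diff)
    have "closed Z"
      unfolding Z_def using continuous_real_polymonial_function[OF pq]
      by (intro closed_Collect_eq continuous_at_imp_continuous_on) auto
    then have Z: "Z \<in> sets borel"
      by simp
    have "emeasure lebesgue S \<le> emeasure lebesgue Z"
      using S(1) Z eq by (intro emeasure_mono) (auto simp: Z_def)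
    also have "\<dots> = emeasure lborel Z"
      using Z by (simp add: emeasure_completion main_part_sets)
    finally obtain x where "uncountable {t::real. a + t *\<^sub>R (x - a) \<in> Z}"
      using uncountable_line_inter_if_emeasure_pos[OF Z] S(2) by fastforce
    moreover have "finite {t::real. p (a + t *\<^sub>R (x - a)) - q (a + t *\<^sub>R (x - a)) = 0}"
      using real_polynomial_function_along_line[OF pq] \<open>p a \<noteq> q a\<close>
      by (intro real_polynomial_function_finite_roots[of _ 0]) auto
    ultimately show False
      by (simp add: Z_def countable_finite)
  qed
qed

lemma real_polynomial_function_const_slices_if_on_positive_measure:
  fixes g :: "'a::euclidean_space \<times> 'b::real_normed_vector \<Rightarrow> real"
  assumes g: "real_polynomial_function g"
    and S: "S \<in> sets lebesgue" "0 < emeasure lebesgue S"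
    and const: "\<And>x y. x \<in> S \<Longrightarrow> g (x, y) = g (x, y\<^sub>0)"
  shows "g (x, y) = g (x, y\<^sub>0)"
proof -
  have "(\<lambda>x. g (x, y)) = (\<lambda>x. g (x, y\<^sub>0))"
    using real_polynomial_function_slice[OF g] real_polynomial_function_slice[OF g] S const
    by (rule real_polynomial_function_eq_if_eq_on_positive_measure)
  then show ?thesis
    by (rule fun_cong)
qed

lemma marg_nonneg:
  assumes "is_density P"
  shows "0 \<le> marg P x"
  using assms unfolding is_density_def marg_def by (simp add: integral_nonneg)

lemma borel_measurable_marg:
  assumes "is_density P"
  shows "marg P \<in> borel_measurable lborel"
proof -
  have "case_prod (\<lambda>x y. P (x, y)) \<in> borel_measurable (lborel \<Otimes>\<^sub>M lborel)"
    using assms unfolding is_density_def lborel_prod by simp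
  then show ?thesis
    unfolding marg_def[abs_def] by (rule lborel.borel_measurable_lebesgue_integral)
qed

lemma AE_marg_eq_if_marg_measure_eq:
  assumes "is_density P" "is_density Q" "marg_measure P = marg_measure Q"
  shows "AE x in lborel. marg P x = marg Q x"
proof -
  have "AE x in lborel. ennreal (marg P x) = ennreal (marg Q x)"
    using assms(3) borel_measurable_marg[OF assms(1)] borel_measurable_marg[OF assms(2)]
    unfolding marg_measure_def by (intro sigma_finite_measure.density_unique[OF sigma_finite_lborel]) auto
  then show ?thesis
    by (rule eventually_mono) (simp add: marg_nonneg assms(1,2))
qed

lemma integral_cond_dens:
  assumes "marg P x \<noteq> 0"
  shows "(\<integral>y. cond_dens P x y \<partial>lborel) = 1"
  using assms by (simp add: cond_dens_def marg_def)

lemma integral_slice_eq_marg_mult_cond_mean: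
  assumes "marg P x \<noteq> 0"
  shows "(\<integral>y. y * P (x, y) \<partial>lborel) = marg P x * (\<integral>y. y * cond_dens P x y \<partial>lborel)"
  using assms by (simp add: cond_dens_def)

lemma cond_dens_cong:
  assumes "\<And>y. P (x, y) = Q (x, y)"
  shows "cond_dens P x = cond_dens Q x"
  using assms by (simp add: cond_dens_def marg_def fun_eq_iff)

lemma cond_dens_eq_if_proportional:
  assumes "marg P x \<noteq> 0" "marg Q x \<noteq> 0" and proportional: "\<And>y. cond_dens P x y = r * cond_dens Q x y"
  shows "cond_dens P x = cond_dens Q x"
proof -
  have "1 = (\<integral>y. r * cond_dens Q x y \<partial>lborel)"
    using integral_cond_dens[OF assms(1)] proportional by simp
  also have "\<dots> = r"
    using integral_cond_dens[OF assms(2)] by simp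
  finally have "r = 1" ..
  then show ?thesis
    using proportional by (simp add: fun_eq_iff)
qed

lemma expect_y_eq_iterated_integral:
  assumes "has_expect_y P"
  shows "expect_y P = (\<integral>x. (\<integral>y. y * P (x, y) \<partial>lborel) \<partial>lborel)"
    and "integrable lborel (\<lambda>x. \<integral>y. y * P (x, y) \<partial>lborel)"
proof -
  have int: "integrable (lborel \<Otimes>\<^sub>M lborel) (\<lambda>z. snd z * P z)"
    using assms unfolding has_expect_y_def lborel_prod .
  show "expect_y P = (\<integral>x. (\<integral>y. y * P (x, y) \<partial>lborel) \<partial>lborel)"
    using lborel_pair.integral_fst'[OF int] unfolding expect_y_def lborel_prod by simp
  show "integrable lborel (\<lambda>x. \<integral>y. y * P (x, y) \<partial>lborel)"
    using lborel_pair.integrable_fst'[OF int] by simp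
qed

lemma expect_y_eq_if_cond_mean_eq:
  assumes "is_density P" "is_density Q" "\<And>x. 0 < marg P x"
    and "has_expect_y P" "has_expect_y Q" "marg_measure P = marg_measure Q"
    and cond_mean: "\<And>x. (\<integral>y. y * cond_dens P x y \<partial>lborel) = (\<integral>y. y * cond_dens Q x y \<partial>lborel)"
  shows "expect_y P = expect_y Q"
proof -
  have "AE x in lborel. (\<integral>y. y * P (x, y) \<partial>lborel) = (\<integral>y. y * Q (x, y) \<partial>lborel)"
    using AE_marg_eq_if_marg_measure_eq[OF assms(1,2,6)]
  proof (rule eventually_mono)
    fix x
    assume "marg P x = marg Q x"
    moreover have "marg P x \<noteq> 0"
      using assms(3)[of x] by simp
    ultimately show "(\<integral>y. y * P (x, y) \<partial>lborel) = (\<integral>y. y * Q (x, y) \<partial>lborel)"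
      using cond_mean[of x] by (simp add: integral_slice_eq_marg_mult_cond_mean)
  qed
  then show ?thesis
    unfolding expect_y_eq_iterated_integral(1)[OF assms(4)] expect_y_eq_iterated_integral(1)[OF assms(5)]
    using expect_y_eq_iterated_integral(2)[OF assms(4)] expect_y_eq_iterated_integral(2)[OF assms(5)]
    by (intro integral_cong_AE borel_measurable_integrable)
qed

lemma condition3I:
  assumes "0 < c"
    and expect_eq: "\<And>P Q S. P \<in> D \<Longrightarrow> Q \<in> D \<Longrightarrow> has_expect_y P \<Longrightarrow> has_expect_y Q \<Longrightarrow>
      marg_measure P = marg_measure Q \<Longrightarrow> S \<in> sets lebesgue \<Longrightarrow> 0 < emeasure lebesgue S \<Longrightarrow>
      (\<And>x y. x \<in> S \<Longrightarrow> P (x, y) = Q (x, y)) \<Longrightarrow> expect_y P = expect_y Q"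
  shows "condition3 c D"
proof -
  have "0 < emeasure lebesgue S" if "ennreal c \<le> emeasure lebesgue S" for S
    using assms(1) that by (metis ennreal_less_zero_iff order_less_le_trans)
  then show ?thesis
    unfolding condition3_def using expect_eq by blast
qed

lemma condition3_poly_expect_class:
  assumes "0 < c"
  shows "condition3 c poly_expect_class"
proof (rule condition3I[OF assms])
  fix P Q :: "(real^'d::finite) \<times> real \<Rightarrow> real" and S
  assume P: "P \<in> poly_expect_class" and Q: "Q \<in> poly_expect_class"
    and expect: "has_expect_y P" "has_expect_y Q" and marg: "marg_measure P = marg_measure Q"
    and S: "S \<in> sets lebesgue" "0 < emeasure lebesgue S"
    and agree: "\<And>x y. x \<in> S \<Longrightarrow> P (x, y) = Q (x, y)"
  obtain fP where dP: "is_density P" and mP: "\<And>x. 0 < marg P x"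
    and fP: "real_polynomial_function fP" and meanP: "\<And>x. (\<integral>y. y * cond_dens P x y \<partial>lborel) = fP x"
    using P unfolding poly_expect_class_def by blast
  obtain fQ where dQ: "is_density Q"
    and fQ: "real_polynomial_function fQ" and meanQ: "\<And>x. (\<integral>y. y * cond_dens Q x y \<partial>lborel) = fQ x"
    using Q unfolding poly_expect_class_def by blast
  have "fP = fQ"
  proof (rule real_polynomial_function_eq_if_eq_on_positive_measure[OF fP fQ S])
    fix x
    assume "x \<in> S"
    then have "cond_dens P x = cond_dens Q x"
      by (intro cond_dens_cong agree)
    then show "fP x = fQ x"
      using meanP meanQ by metis
  qed
  then show "expect_y P = expect_y Q"
    using expect_y_eq_if_cond_mean_eq[OF dP dQ mP expect marg] meanP meanQ by simp
qed

lemma condition3_poly_logdens_class: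
  assumes "0 < c"
  shows "condition3 c poly_logdens_class"
proof (rule condition3I[OF assms])
  fix P Q :: "(real^'d::finite) \<times> real \<Rightarrow> real" and S
  assume P: "P \<in> poly_logdens_class" and Q: "Q \<in> poly_logdens_class"
    and expect: "has_expect_y P" "has_expect_y Q" and marg: "marg_measure P = marg_measure Q"
    and S: "S \<in> sets lebesgue" "0 < emeasure lebesgue S"
    and agree: "\<And>x y. x \<in> S \<Longrightarrow> P (x, y) = Q (x, y)"
  obtain fP kP where dP: "is_density P" and mP: "\<And>x. 0 < marg P x"
    and fP: "real_polynomial_function fP" and condP: "\<And>x y. cond_dens P x y = kP x * exp (fP (x, y))"
    using P unfolding poly_logdens_class_def by blast
  obtain fQ kQ where dQ: "is_density Q" and mQ: "\<And>x. 0 < marg Q x"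
    and fQ: "real_polynomial_function fQ" and condQ: "\<And>x y. cond_dens Q x y = kQ x * exp (fQ (x, y))"
    using Q unfolding poly_logdens_class_def by blast
  have kP: "kP x \<noteq> 0" and kQ: "kQ x \<noteq> 0" for x
    using integral_cond_dens[of P x] integral_cond_dens[of Q x] mP[of x] mQ[of x]
    by (auto simp: condP condQ)
  define g where "g z = fP z - fQ z" for z
  have g_const: "g (x, y) = g (x, 0)" for x y
  proof (rule real_polynomial_function_const_slices_if_on_positive_measure[OF _ S])
    show "real_polynomial_function g"
      unfolding g_def[abs_def] using fP fQ by (rule real_polynomial_function_diff)
  next
    fix x y
    assume "x \<in> S"
    then have "cond_dens P x = cond_dens Q x"
      by (intro cond_dens_cong agree)
    then have "kP x * exp (fP (x, y')) = kQ x * exp (fQ (x, y'))" for y'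
      using condP condQ by metis
    then have "exp (g (x, y')) = kQ x / kP x" for y'
      using kP[of x] by (simp add: g_def exp_diff field_simps)
    then show "g (x, y) = g (x, 0)"
      by (metis exp_inj_iff)
  qed
  have "cond_dens P x = cond_dens Q x" for x
  proof (rule cond_dens_eq_if_proportional)
    fix y
    have "fP (x, y) = g (x, 0) + fQ (x, y)"
      using g_const[of x y] by (simp add: g_def)
    then show "cond_dens P x y = kP x * exp (g (x, 0)) / kQ x * cond_dens Q x y"
      using kQ[of x] by (simp add: condP condQ exp_add)
  qed (use mP mQ in \<open>simp_all add: less_imp_neq[symmetric]\<close>)
  then show "expect_y P = expect_y Q"
    using expect_y_eq_if_cond_mean_eq[OF dP dQ mP expect marg] by simp
qed

theorem lemma4p6:
  fixes c :: real
  assumes "0 < c" and "c < 1/2"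
  shows "condition3 c (poly_logdens_class :: ((real^'d::finite) \<times> real \<Rightarrow> real) set)
       \<and> condition3 c (poly_expect_class :: ((real^'d::finite) \<times> real \<Rightarrow> real) set)"
  using condition3_poly_logdens_class condition3_poly_expect_class assms(1) by blast

end
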